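(* Let $Ab_0$ denote the class of all finite abelian groups, and define $f:Ab_0\to(0,\infty)$ by $f(G)=\frac{|\mathrm{Aut}(G)|}{|G|}$, where $\mathrm{Aut}(G)$ is the automorphism group of $G$. Then the set $\mathrm{Im}(f)\cap[0,1]$, where $\mathrm{Im}(f)=\{f(G)\mid G\in Ab_0\}$, is dense in $[0,1]$. *)

theory Defs
  imports "HOL-Analysis.Analysis" "HOL-Algebra.Bij"
begin

definition aut_ratio :: "('a, 'b) monoid_scheme \<Rightarrow> real" where
  "aut_ratio G = real (card (auto G)) / real (card (carrier G))"

text \<open>Image of f over all finite abelian groups. Every finite group is isomorphic
  to one whose carrier is a subset of nat, so carriers in nat cover all iso classes.\<close>
definition aut_ratio_image :: "real set" where
  "aut_ratio_image = {aut_ratio G | G :: nat monoid. comm_group G \<and> finite (carrier G)}"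

end

theory Submission
  imports Defs "HOL-Analysis.Harmonic_Numbers" "HOL-Number_Theory.Number_Theory"
begin

text \<open>The cyclic group of order \<open>m\<close> has \<open>totient m\<close> automorphisms (multiplication by
  the units), so its ratio is the product of \<open>1 - 1/p\<close> over the primes \<open>p\<close> dividing
  \<open>m\<close>. Euler's inequality \<open>harm N \<le> \<Prod>p\<le>N. p/(p - 1)\<close> makes these products tend
  to \<open>0\<close>. Hence multiplying in the factors \<open>1 - 1/p\<close> for the primes \<open>p > A\<close> one at a
  time descends from \<open>1\<close> to \<open>0\<close> in steps shorter than \<open>1/A\<close>, and the first value not
  exceeding a target \<open>y \<in> (0, 1]\<close> lies within \<open>1/A\<close> of \<open>y\<close>.\<close>

definition nat_mod_group :: "nat \<Rightarrow> nat monoid" where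
  "nat_mod_group m = \<lparr>carrier = {..<m}, mult = (\<lambda>a b. (a + b) mod m), one = 0\<rparr>"

lemma comm_group_nat_mod_group:
  assumes "0 < m"
  shows "comm_group (nat_mod_group m)"
proof (rule comm_groupI)
  fix x y z
  show "x \<otimes>\<^bsub>nat_mod_group m\<^esub> y \<otimes>\<^bsub>nat_mod_group m\<^esub> z
      = x \<otimes>\<^bsub>nat_mod_group m\<^esub> (y \<otimes>\<^bsub>nat_mod_group m\<^esub> z)"
    by (simp add: nat_mod_group_def mod_add_left_eq mod_add_right_eq add.assoc)
  show "x \<otimes>\<^bsub>nat_mod_group m\<^esub> y = y \<otimes>\<^bsub>nat_mod_group m\<^esub> x"
    by (simp add: nat_mod_group_def add.commute)
next
  fix x assume "x \<in> carrier (nat_mod_group m)"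
  then have "(m - x) mod m \<in> carrier (nat_mod_group m)"
    "(m - x) mod m \<otimes>\<^bsub>nat_mod_group m\<^esub> x = \<one>\<^bsub>nat_mod_group m\<^esub>"
    using assms by (auto simp: nat_mod_group_def mod_add_left_eq)
  then show "\<exists>y\<in>carrier (nat_mod_group m). y \<otimes>\<^bsub>nat_mod_group m\<^esub> x = \<one>\<^bsub>nat_mod_group m\<^esub>"
    by blast
qed (use assms in \<open>auto simp: nat_mod_group_def\<close>)

lemma mult_mod_in_auto_nat_mod_group:
  assumes "coprime a m"
  shows "(\<lambda>x\<in>{..<m}. a * x mod m) \<in> auto (nat_mod_group m)"
proof -
  let ?f = "\<lambda>x\<in>{..<m}. a * x mod m"
  have "inj_on ?f {..<m}"
  proof (rule inj_onI)
    fix x y assume "x \<in> {..<m}" "y \<in> {..<m}" "?f x = ?f y"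
    moreover from this have "[a * x = a * y] (mod m)" by (simp add: cong_def)
    then have "[x = y] (mod m)" using assms by (simp add: cong_mult_lcancel_nat coprime_commute)
    ultimately show "x = y" by (simp add: cong_def)
  qed
  moreover have "?f ` {..<m} \<subseteq> {..<m}" by auto
  ultimately have "bij_betw ?f {..<m} {..<m}"
    by (simp add: bij_betw_def endo_inj_surj)
  moreover have "?f ((x + y) mod m) = (?f x + ?f y) mod m" if "x < m" "y < m" for x y
    using that by (simp add: mod_mult_right_eq mod_add_eq distrib_left)
  ultimately show ?thesis
    by (auto simp: auto_def Bij_def hom_def nat_mod_group_def)
qed

lemma hom_nat_mod_group_eq_mult:
  assumes "h \<in> hom (nat_mod_group m) (nat_mod_group m)" "x < m"
  shows "h x = h (1 mod m) * x mod m"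
  using assms(2)
proof (induction x)
  case 0
  then have "comm_group (nat_mod_group m)" by (simp add: comm_group_nat_mod_group)
  then have "h \<one>\<^bsub>nat_mod_group m\<^esub> = \<one>\<^bsub>nat_mod_group m\<^esub>"
    using assms(1) by (simp add: hom_one comm_group.axioms(2))
  then show ?case by (simp add: nat_mod_group_def)
next
  case (Suc x)
  have hom_add: "h ((y + z) mod m) = (h y + h z) mod m" if "y < m" "z < m" for y z
    using assms(1) that by (simp add: hom_def nat_mod_group_def)
  have "h (Suc x) = h ((x + 1 mod m) mod m)" using Suc.prems by simp
  also have "\<dots> = (h x + h (1 mod m)) mod m" using Suc.prems by (intro hom_add) auto
  also have "\<dots> = h (1 mod m) * Suc x mod m"
    using Suc by (simp add: mod_add_right_eq add.commute)
  finally show ?case .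
qed

lemma auto_nat_mod_group_eq_mult:
  assumes "h \<in> auto (nat_mod_group m)"
  shows "h = (\<lambda>x\<in>{..<m}. h (1 mod m) * x mod m)"
proof (rule extensionalityI)
  show "h \<in> extensional {..<m}"
    using assms by (simp add: auto_def Bij_def nat_mod_group_def)
  show "h x = (\<lambda>x\<in>{..<m}. h (1 mod m) * x mod m) x" if "x \<in> {..<m}" for x
    using assms that hom_nat_mod_group_eq_mult by (simp add: auto_def)
qed simp

lemma auto_nat_mod_group_coprime:
  assumes "h \<in> auto (nat_mod_group m)" "0 < m"
  shows "coprime (h (1 mod m)) m"
proof -
  have "h ` {..<m} = {..<m}"
    using assms(1) by (simp add: auto_def Bij_def bij_betw_def nat_mod_group_def)
  then obtain x where "x < m" "h x = 1 mod m"
    using assms(2) by (metis imageE lessThan_iff mod_less_divisor)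
  then have "[h (1 mod m) * x = 1] (mod m)"
    using assms(1) hom_nat_mod_group_eq_mult by (simp add: auto_def cong_def)
  then show ?thesis
    using coprime_iff_invertible_nat by auto
qed

lemma card_coprime_below_eq_totient:
  assumes "0 < m"
  shows "card {a. a < m \<and> coprime a m} = totient m"
proof (cases "m = 1")
  case False
  with assms have "m > 1" by simp
  have "a < m \<and> coprime a m \<longleftrightarrow> a \<in> totatives m" for a
    using \<open>m > 1\<close> by (cases "a = 0") (auto simp: in_totatives_iff totatives_less)
  then have "{a. a < m \<and> coprime a m} = totatives m" by blast
  then show ?thesis by (simp add: totient_def)
qed simp

lemma card_auto_nat_mod_group:
  assumes "0 < m"
  shows "card (auto (nat_mod_group m)) = totient m"
proof -
  have "bij_betw (\<lambda>h. h (1 mod m)) (auto (nat_mod_group m)) {a. a < m \<and> coprime a m}"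
  proof (rule bij_betw_imageI)
    show "inj_on (\<lambda>h. h (1 mod m)) (auto (nat_mod_group m))"
      by (rule inj_onI) (metis auto_nat_mod_group_eq_mult)
    show "(\<lambda>h. h (1 mod m)) ` auto (nat_mod_group m) = {a. a < m \<and> coprime a m}"
    proof (intro equalityI image_subsetI subsetI)
      fix h assume h: "h \<in> auto (nat_mod_group m)"
      then have "h \<in> hom (nat_mod_group m) (nat_mod_group m)" by (simp add: auto_def)
      then have "h (1 mod m) \<in> carrier (nat_mod_group m)"
        by (rule hom_in_carrier) (use assms in \<open>simp add: nat_mod_group_def\<close>)
      then show "h (1 mod m) \<in> {a. a < m \<and> coprime a m}"
        using auto_nat_mod_group_coprime[OF h assms] by (simp add: nat_mod_group_def)
    next
      fix a assume "a \<in> {a. a < m \<and> coprime a m}"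
      then have "a = (\<lambda>x\<in>{..<m}. a * x mod m) (1 mod m)" "a < m" "coprime a m"
        using assms by (auto simp: mod_mult_right_eq)
      then show "a \<in> (\<lambda>h. h (1 mod m)) ` auto (nat_mod_group m)"
        using mult_mod_in_auto_nat_mod_group by blast
    qed
  qed
  then show ?thesis
    using assms by (simp add: bij_betw_same_card card_coprime_below_eq_totient)
qed

lemma aut_ratio_nat_mod_group:
  assumes "0 < m"
  shows "aut_ratio (nat_mod_group m) = (\<Prod>p\<in>prime_factors m. 1 - 1 / real p)"
  unfolding aut_ratio_def card_auto_nat_mod_group[OF assms]
  using assms totient_formula2[of m] by (simp add: nat_mod_group_def)

lemma prod_primes_in_aut_ratio_image:
  assumes "finite S" "\<And>p. p \<in> S \<Longrightarrow> prime p"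
  shows "(\<Prod>p\<in>S. 1 - 1 / real p) \<in> aut_ratio_image"
proof -
  have "0 < \<Prod>S" using assms by (simp add: prime_gt_0_nat prod_pos)
  moreover have "prime_factors (\<Prod>S) = S"
  proof -
    have "0 \<notin> S" using assms(2) not_prime_0 by blast
    then show ?thesis
      using assms by (subst prime_factors_prod) (auto simp: prime_prime_factors)
  qed
  ultimately have "aut_ratio (nat_mod_group (\<Prod>S)) = (\<Prod>p\<in>S. 1 - 1 / real p)"
    by (simp add: aut_ratio_nat_mod_group)
  moreover have "comm_group (nat_mod_group (\<Prod>S))" "finite (carrier (nat_mod_group (\<Prod>S)))"
    using \<open>0 < \<Prod>S\<close> by (simp add: comm_group_nat_mod_group) (simp add: nat_mod_group_def)
  ultimately show ?thesis
    unfolding aut_ratio_image_def by (intro CollectI exI[of _ "nat_mod_group (\<Prod>S)"]) simp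
qed

lemma reciprocal_nat_le_1 [simp]: "1 / real (n::nat) \<le> 1"
  by (cases n) simp_all

lemma prime_reciprocal_less_1: "prime (p::nat) \<Longrightarrow> 1 / real p < 1"
  using prime_gt_1_nat[of p] by (simp add: divide_less_eq_1)

lemma multiplicity_le_self:
  fixes p n :: nat
  assumes "prime p" "0 < n"
  shows "multiplicity p n \<le> n"
proof -
  have "multiplicity p n < 2 ^ multiplicity p n" by (rule less_exp)
  also have "\<dots> \<le> p ^ multiplicity p n"
    using prime_ge_2_nat[OF assms(1)] by (simp add: power_mono)
  also have "\<dots> \<le> n"
    using assms(2) by (intro dvd_imp_le multiplicity_dvd)
  finally show ?thesis by simp
qed

lemma prod_multiplicity_eq_self:
  fixes n :: nat
  assumes "finite P" "\<And>p. p \<in> P \<Longrightarrow> prime p" "prime_factors n \<subseteq> P" "0 < n"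
  shows "(\<Prod>p\<in>P. p ^ multiplicity p n) = n"
proof -
  have "(\<Prod>p\<in>P. p ^ multiplicity p n) = (\<Prod>p\<in>prime_factors n. p ^ multiplicity p n)"
    using assms by (intro prod.mono_neutral_right) (auto simp: prime_factors_multiplicity)
  also have "\<dots> = n"
    using assms(4) by (rule prime_factorization_nat[symmetric])
  finally show ?thesis .
qed

text \<open>Expanding the product gives the sum of \<open>1/n\<close> over all \<open>n\<close> whose prime factors
  are at most \<open>N\<close> with multiplicities at most \<open>N\<close>; every \<open>n \<in> {1..N}\<close> is one of them.\<close>
lemma harm_le_prod_geometric_sums:
  "(harm N :: real) \<le> (\<Prod>p | prime p \<and> p \<le> N. \<Sum>k\<le>N. (1 / real p) ^ k)"
proof -
  define P where "P = {p. prime p \<and> p \<le> N}"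
  define F where "F g = (\<Prod>p\<in>P. (1 / real p) ^ g p)" for g :: "nat \<Rightarrow> nat"
  define exps where "exps n = (\<lambda>p\<in>P. multiplicity p n)" for n
  have "finite P" by (simp add: P_def)
  have factors: "prime_factors n \<subseteq> P" if "n \<in> {1..N}" for n
  proof
    fix p assume "p \<in> prime_factors n"
    then have "prime p" "p \<le> n" using that by (auto intro: dvd_imp_le)
    then show "p \<in> P" using that by (simp add: P_def)
  qed
  have prod_exps: "(\<Prod>p\<in>P. p ^ exps n p) = n" if "n \<in> {1..N}" for n
  proof -
    have "(\<Prod>p\<in>P. p ^ exps n p) = (\<Prod>p\<in>P. p ^ multiplicity p n)"
      unfolding exps_def by (intro prod.cong refl) simp
    also have "\<dots> = n"
      using \<open>finite P\<close> factors[OF that] that by (intro prod_multiplicity_eq_self) (auto simp: P_def)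
    finally show ?thesis .
  qed
  have "inj_on exps {1..N}"
    by (rule inj_on_inverseI[where g = "\<lambda>e. \<Prod>p\<in>P. p ^ e p"]) (rule prod_exps)
  moreover have exps_mem: "exps n \<in> PiE P (\<lambda>_. {..N})" if "n \<in> {1..N}" for n
  proof -
    have "multiplicity p n \<le> N" if "p \<in> P" for p
      using multiplicity_le_self[of p n] \<open>n \<in> {1..N}\<close> \<open>p \<in> P\<close> by (simp add: P_def)
    then show ?thesis by (simp add: exps_def)
  qed
  moreover have "F (exps n) = 1 / real n" if "n \<in> {1..N}" for n
  proof -
    have "F (exps n) = 1 / real (\<Prod>p\<in>P. p ^ exps n p)"
      by (simp add: F_def power_one_over prod_dividef)
    then show ?thesis by (simp add: prod_exps[OF that])
  qed
  ultimately have "harm N = (\<Sum>g\<in>exps ` {1..N}. F g)"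
    by (simp add: harm_def sum.reindex divide_inverse)
  also have "\<dots> \<le> (\<Sum>g\<in>PiE P (\<lambda>_. {..N}). F g)"
  proof (rule sum_mono2)
    show "finite (PiE P (\<lambda>_. {..N}))" using \<open>finite P\<close> by (simp add: finite_PiE)
    show "exps ` {1..N} \<subseteq> PiE P (\<lambda>_. {..N})" using exps_mem by blast
    show "0 \<le> F g" for g unfolding F_def by (intro prod_nonneg) simp
  qed
  also have "\<dots> = (\<Prod>p\<in>P. \<Sum>k\<le>N. (1 / real p) ^ k)"
    unfolding F_def using \<open>finite P\<close> by (rule prod_sum_PiE[symmetric]) simp
  finally show ?thesis by (simp add: P_def)
qed

lemma harm_mult_prod_primes_le_one:
  "(harm N :: real) * (\<Prod>p | prime p \<and> p \<le> N. 1 - 1 / real p) \<le> 1"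
proof -
  let ?P = "{p. prime p \<and> p \<le> N}"
  have "(harm N :: real) * (\<Prod>p\<in>?P. 1 - 1 / real p)
      \<le> (\<Prod>p\<in>?P. \<Sum>k\<le>N. (1 / real p) ^ k) * (\<Prod>p\<in>?P. 1 - 1 / real p)"
    by (intro mult_right_mono harm_le_prod_geometric_sums prod_nonneg) simp_all
  also have "\<dots> = (\<Prod>p\<in>?P. (1 - 1 / real p) * (\<Sum>k<Suc N. (1 / real p) ^ k))"
    by (simp add: prod.distrib lessThan_Suc_atMost mult.commute)
  also have "\<dots> = (\<Prod>p\<in>?P. 1 - (1 / real p) ^ Suc N)"
    by (simp only: one_diff_power_eq[symmetric])
  also have "\<dots> \<le> 1"
    by (intro prod_le_1) (auto intro!: power_le_one simp del: power_Suc)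
  finally show ?thesis .
qed

lemma prod_primes_le_tendsto_zero:
  "(\<lambda>N. \<Prod>p | prime p \<and> p \<le> N. 1 - 1 / real p) \<longlonglongrightarrow> 0"
proof (rule tendsto_sandwich)
  show "\<forall>\<^sub>F N in sequentially. 0 \<le> (\<Prod>p | prime p \<and> p \<le> N. 1 - 1 / real p)"
    by (intro always_eventually allI prod_nonneg) simp
  show "\<forall>\<^sub>F N in sequentially. (\<Prod>p | prime p \<and> p \<le> N. 1 - 1 / real p) \<le> inverse (harm N)"
    using eventually_gt_at_top[of 0]
  proof eventually_elim
    case (elim N)
    then show ?case
      using harm_mult_prod_primes_le_one[of N] harm_pos[of N] by (simp add: field_simps)
  qed
  show "(\<lambda>N. inverse (harm N :: real)) \<longlonglongrightarrow> 0"
    using harm_at_top by (rule tendsto_inverse_0_at_top)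
qed simp

lemma prod_primes_between_tendsto_zero:
  "(\<lambda>N. \<Prod>p | prime p \<and> A < p \<and> p \<le> N. 1 - 1 / real p) \<longlonglongrightarrow> 0"
proof -
  define Q where "Q N = (\<Prod>p | prime p \<and> p \<le> N. 1 - 1 / real p)" for N
  have "0 < Q A"
    unfolding Q_def by (intro prod_pos) (auto dest: prime_reciprocal_less_1)
  have "\<forall>\<^sub>F N in sequentially. Q N / Q A = (\<Prod>p | prime p \<and> A < p \<and> p \<le> N. 1 - 1 / real p)"
    using eventually_ge_at_top[of A]
  proof eventually_elim
    case (elim N)
    then have "{p. prime p \<and> p \<le> N} = {p. prime p \<and> p \<le> A} \<union> {p. prime p \<and> A < p \<and> p \<le> N}"
      by auto
    then have "Q N = Q A * (\<Prod>p | prime p \<and> A < p \<and> p \<le> N. 1 - 1 / real p)"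
      unfolding Q_def by (subst prod.union_disjoint[symmetric]) auto
    then show ?case using \<open>0 < Q A\<close> by simp
  qed
  moreover have "(\<lambda>N. Q N / Q A) \<longlonglongrightarrow> 0"
    unfolding Q_def by (intro tendsto_divide_zero prod_primes_le_tendsto_zero)
  ultimately show ?thesis by (rule Lim_transform_eventually[rotated])
qed

lemma small_steps_enter_interval:
  fixes r :: "nat \<Rightarrow> real"
  assumes "r \<longlonglongrightarrow> 0" "0 < y" "y - \<delta> < r 0" "\<And>n. r n - r (Suc n) < \<delta>"
  shows "\<exists>n. y - \<delta> < r n \<and> r n \<le> y"
proof -
  obtain n0 where "r n0 < y"
    using order_tendstoD(2)[OF assms(1,2)] by (auto simp: eventually_sequentially)
  then have "\<exists>n. r n \<le> y" by (auto intro: less_imp_le)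
  define n where "n = (LEAST n. r n \<le> y)"
  have "r n \<le> y" unfolding n_def using \<open>\<exists>n. r n \<le> y\<close> by (rule LeastI_ex)
  moreover have "y - \<delta> < r n"
  proof (cases n)
    case (Suc m)
    then have "y < r m" using not_less_Least[of m "\<lambda>n. r n \<le> y"] by (simp add: n_def)
    then show ?thesis using assms(4)[of m] Suc by simp
  qed (use assms(3) in simp)
  ultimately show ?thesis by blast
qed

lemma prod_primes_approx_from_below:
  assumes "0 < y" "y \<le> 1" "0 < \<delta>"
  shows "\<exists>S. finite S \<and> (\<forall>p\<in>S. prime p) \<and>
    y - \<delta> < (\<Prod>p\<in>S. 1 - 1 / real p) \<and> (\<Prod>p\<in>S. 1 - 1 / real p) \<le> y"
proof -
  obtain A where A: "0 < A" "1 / real A < \<delta>"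
    using assms(3) ex_inverse_of_nat_less by (auto simp: divide_inverse)
  define S where "S n = {p. prime p \<and> A < p \<and> p \<le> n}" for n
  define r where "r n = (\<Prod>p\<in>S n. 1 - 1 / real p)" for n
  have r_le_1: "r n \<le> 1" for n
    unfolding r_def by (intro prod_le_1) simp_all
  have "r n - r (Suc n) < \<delta>" for n
  proof (cases "Suc n \<in> S (Suc n)")
    case True
    then have "S (Suc n) = insert (Suc n) (S n)" by (auto simp: S_def)
    then have "r n - r (Suc n) = r n / real (Suc n)"
      by (simp add: r_def S_def field_simps)
    also have "\<dots> \<le> 1 / real A"
      using True r_le_1[of n] A(1) by (intro frac_le) (auto simp: S_def r_def intro: prod_nonneg)
    finally show ?thesis using A(2) by simp
  next
    case False
    then have "S (Suc n) = S n" by (auto simp: S_def le_Suc_eq)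
    then show ?thesis using assms(3) by (simp add: r_def)
  qed
  moreover have "r 0 = 1" by (simp add: r_def S_def)
  moreover have "r \<longlonglongrightarrow> 0"
    unfolding r_def S_def by (rule prod_primes_between_tendsto_zero)
  ultimately obtain n where "y - \<delta> < r n" "r n \<le> y"
    using small_steps_enter_interval[of r y \<delta>] assms by force
  then show ?thesis unfolding r_def by (intro exI[of _ "S n"]) (auto simp: S_def)
qed

theorem lemma2p1:
  shows "{0..1::real} \<subseteq> closure (aut_ratio_image \<inter> {0..1})"
proof
  fix x :: real assume x: "x \<in> {0..1}"
  have "\<exists>v\<in>aut_ratio_image \<inter> {0..1}. dist v x < e" if "0 < e" for e
  proof -
    define y where "y = min 1 (x + e / 2)"
    have "0 < y" "y \<le> 1" using x \<open>0 < e\<close> by (auto simp: y_def)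
    then obtain S where S: "finite S" "\<forall>p\<in>S. prime p"
      and approx: "y - e < (\<Prod>p\<in>S. 1 - 1 / real p)" "(\<Prod>p\<in>S. 1 - 1 / real p) \<le> y"
      using prod_primes_approx_from_below \<open>0 < e\<close> by blast
    let ?v = "\<Prod>p\<in>S. 1 - 1 / real p"
    have "?v \<in> aut_ratio_image" using S by (intro prod_primes_in_aut_ratio_image) auto
    moreover have "?v \<in> {0..1}"
      by (auto intro!: prod_nonneg prod_le_1)
    moreover have "dist ?v x < e" using approx x \<open>0 < e\<close> by (auto simp: y_def dist_real_def)
    ultimately show ?thesis by blast
  qed
  then show "x \<in> closure (aut_ratio_image \<inter> {0..1})" by (simp add: closure_approachable)
qed

end
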